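(* Let $\mathcal{H}$ be a finite-dimensional Hilbert space, $\{\rho_\theta;\theta\in\Theta\subset\mathbb{R}^d\}$ a smooth family of density operators, $\theta_0\in\Theta$ with $\rho=\rho_{\theta_0}$ strictly positive, and suppose there exists a $(d+1)$-dimensional real subspace $\tilde{\mathcal{T}}$ of Hermitian operators with $\operatorname{span}_{\mathbb{R}}\{L_i^{(S)}\}_{i=1}^d\subset\tilde{\mathcal{T}}$ and $\mathcal{D}_\rho(\tilde{\mathcal{T}})\subset\tilde{\mathcal{T}}$. Let $G$ be a $d\times d$ real positive matrix and define $$\hat\beta=\begin{cases}\dfrac{\operatorname{Tr}\big|\sqrt G\,\operatorname{Im}(J^{(R)}_{\theta_0})^{-1}\sqrt G\big|}{2\operatorname{Tr}G\{(J^{(S)}_{\theta_0})^{-1}-\operatorname{Re}((J^{(R)}_{\theta_0})^{-1})\}}&\text{if }(J^{(S)}_{\theta_0})^{-1}\ne\operatorname{Re}((J^{(R)}_{\theta_0})^{-1}),\\ \infty&\text{otherwise.}\end{cases}$$ Then $$\max_{0\le\beta\le1}C^{(\beta)}_{\theta_0,G}=\begin{cases}C^{(1)}_{\theta_0,G}&\text{if }\hat\beta\ge1,\\ C^{(\hat\beta)}_{\theta_0,G}&\text{otherwise.}\end{cases}$$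
   Context: $\partial_i\rho=\frac{\partial}{\partial\theta^i}\rho_\theta|_{\theta=\theta_0}$. Commutation operator: $\mathcal{D}_\rho(X)\rho+\rho\mathcal{D}_\rho(X)=\sqrt{-1}(X\rho-\rho X)$. For $\beta\in[0,1]$, the $\beta$ logarithmic derivatives $L_i^{(\beta)}$ are defined by $\partial_i\rho=\frac{1+\beta}{2}\rho L_i^{(\beta)}+\frac{1-\beta}{2}L_i^{(\beta)}\rho$; $L_i^{(S)}=L_i^{(0)}$ (SLD, assumed linearly independent), $L_i^{(R)}=L_i^{(1)}$ (RLD). $J^{(\beta)}_{\theta_0}=[\operatorname{Tr}\partial_i\rho\,L_j^{(\beta)}]_{ij}$, $J^{(S)}_{\theta_0}=J^{(0)}_{\theta_0}$, $J^{(R)}_{\theta_0}=J^{(1)}_{\theta_0}$, and $C^{(\beta)}_{\theta_0,G}=\operatorname{Tr}G(J^{(\beta)}_{\theta_0})^{-1}+\operatorname{Tr}|\sqrt G\,\operatorname{Im}(J^{(\beta)}_{\theta_0})^{-1}\sqrt G|$. Re, Im entrywise; $|X|=(X^*X)^{1/2}$. *)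

theory Defs
  imports "HOL-Analysis.Analysis"
begin

definition cstar :: "complex^'n^'n \<Rightarrow> complex^'n^'n" where
  "cstar A = (\<chi> i j. cnj (A $ j $ i))"

definition hermitian :: "complex^'n^'n \<Rightarrow> bool" where
  "hermitian A \<longleftrightarrow> cstar A = A"

definition cinner :: "complex^'n \<Rightarrow> complex^'n \<Rightarrow> complex" where
  "cinner v w = (\<Sum>i\<in>UNIV. cnj (v $ i) * w $ i)"

definition density_op :: "complex^'n^'n \<Rightarrow> bool" where
  "density_op A \<longleftrightarrow> hermitian A \<and> (\<forall>v. 0 \<le> Re (cinner v (A *v v))) \<and> trace A = 1"

definition strictly_pos :: "complex^'n^'n \<Rightarrow> bool" where
  "strictly_pos A \<longleftrightarrow> hermitian A \<and> (\<forall>v. v \<noteq> 0 \<longrightarrow> 0 < Re (cinner v (A *v v)))"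

definition partial :: "'d::finite \<Rightarrow> (real^'d \<Rightarrow> 'a::real_normed_vector) \<Rightarrow> real^'d \<Rightarrow> 'a" where
  "partial i f x = vector_derivative (\<lambda>t. f (x + t *\<^sub>R axis i 1)) (at 0)"

definition smooth_on :: "(real^'d::finite \<Rightarrow> 'a::real_normed_vector) \<Rightarrow> (real^'d) set \<Rightarrow> bool" where
  "smooth_on f S \<longleftrightarrow> (\<forall>is::'d list.
      continuous_on S (foldr partial is f) \<and>
      (\<forall>i. \<forall>x\<in>S. (\<lambda>t. foldr partial is f (x + t *\<^sub>R axis i 1)) differentiable (at 0)))"

definition logder :: "real \<Rightarrow> complex^'n^'n \<Rightarrow> complex^'n^'n \<Rightarrow> complex^'n^'n" where
  "logder \<beta> \<rho> D = (THE L. D = ((1 + \<beta>) / 2) *\<^sub>R (\<rho> ** L) + ((1 - \<beta>) / 2) *\<^sub>R (L ** \<rho>))"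

definition commop :: "complex^'n^'n \<Rightarrow> complex^'n^'n \<Rightarrow> complex^'n^'n" where
  "commop \<rho> X = (THE Y. Y ** \<rho> + \<rho> ** Y = map_matrix (\<lambda>z. \<i> * z) (X ** \<rho> - \<rho> ** X))"

definition Jmat :: "real \<Rightarrow> complex^'n^'n \<Rightarrow> ('d::finite \<Rightarrow> complex^'n^'n) \<Rightarrow> complex^'d^'d" where
  "Jmat \<beta> \<rho> dr = (\<chi> i j. trace (dr i ** logder \<beta> \<rho> (dr j)))"

definition Re_mat :: "complex^'d^'d \<Rightarrow> real^'d^'d" where
  "Re_mat A = (\<chi> i j. Re (A $ i $ j))"

definition Im_mat :: "complex^'d^'d \<Rightarrow> real^'d^'d" where
  "Im_mat A = (\<chi> i j. Im (A $ i $ j))"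

definition rpsd :: "real^'d^'d \<Rightarrow> bool" where
  "rpsd A \<longleftrightarrow> transpose A = A \<and> (\<forall>v. 0 \<le> v \<bullet> (A *v v))"

definition rposdef :: "real^'d^'d \<Rightarrow> bool" where
  "rposdef A \<longleftrightarrow> transpose A = A \<and> (\<forall>v. v \<noteq> 0 \<longrightarrow> 0 < v \<bullet> (A *v v))"

definition msqrt :: "real^'d^'d \<Rightarrow> real^'d^'d" where
  "msqrt A = (THE S. rpsd S \<and> S ** S = A)"

definition mabs :: "real^'d^'d \<Rightarrow> real^'d^'d" where
  "mabs X = msqrt (transpose X ** X)"

text \<open>C^(beta)_{theta_0,G} = Tr G (J^(beta))^{-1} + Tr |sqrt G Im (J^(beta))^{-1} sqrt G|.
  The first trace is real (J^(beta) is Hermitian); its real part is taken to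
  obtain a real-valued quantity.\<close>
definition Cbound :: "real \<Rightarrow> complex^'n^'n \<Rightarrow> ('d::finite \<Rightarrow> complex^'n^'n) \<Rightarrow> real^'d^'d \<Rightarrow> real" where
  "Cbound \<beta> \<rho> dr G =
     Re (trace ((map_matrix complex_of_real G) ** matrix_inv (Jmat \<beta> \<rho> dr)))
     + trace (mabs (msqrt G ** Im_mat (matrix_inv (Jmat \<beta> \<rho> dr)) ** msqrt G))"

end

theory Submission
  imports Defs
begin

text \<open>
  For strictly positive \<rho> the map E_\<beta>(L) = ((1 + \<beta>)/2) \<rho> L + ((1 - \<beta>)/2) L \<rho>, whose
  preimages are the \<beta> logarithmic derivatives, is injective for 0 \<le> \<beta> \<le> 1, and
  E_\<beta> = E_0 + i\<beta> E_0 \<circ> D with D the commutation operator. The real part of Tr (E_0(X) Y) is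
  an inner product on Hermitian matrices for which D is skew, so the (d+1)-dimensional D-invariant
  space T has a basis formed by the SLDs L_i and one unit vector L_0 orthogonal to them. Writing D
  in the dual basis gives inv J^(\<beta>) = inv J_S - \<beta>^2 v v^T + i\<beta> F, where v_j and F_mj are the
  L_0- and L_m-coordinates of D applied to the j-th dual vector. Hence
  C^(\<beta>) = Tr G inv J_S - \<beta>^2 v^T G v + \<beta> Tr |sqrt G F sqrt G| is a concave quadratic in \<beta>,
  with v^T G v = Tr G (inv J_S - Re inv J_R) and F = Im inv J_R; its maximum over [0,1] is at the
  vertex \<beta>hat if \<beta>hat < 1 and at \<beta> = 1 otherwise.
\<close>

section \<open>Matrix algebra\<close>

lemma symmetric_matrix_entry: "transpose A = A \<Longrightarrow> A $ i $ j = A $ j $ i"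
  by (metis transpose_def vec_lambda_beta)

lemma inner_symmetric_matrix:
  fixes A :: "real^'d^'d"
  assumes "transpose A = A"
  shows "x \<bullet> (A *v y) = (A *v x) \<bullet> y"
  by (metis assms dot_lmul_matrix transpose_matrix_vector)

lemma matrix_add_rdistrib: "((A::'a::semiring_1^'m^'n) + B) ** C = A ** C + B ** C"
  by (simp add: matrix_matrix_mult_def vec_eq_iff sum.distrib distrib_right)

lemma matrix_diff_ldistrib: "(C::'a::ring_1^'m^'n) ** (A - B) = C ** A - C ** B"
  by (simp add: matrix_matrix_mult_def vec_eq_iff sum_subtractf right_diff_distrib)

lemma matrix_diff_rdistrib: "((A::'a::ring_1^'m^'n) - B) ** C = A ** C - B ** C"
  by (simp add: matrix_matrix_mult_def vec_eq_iff sum_subtractf left_diff_distrib)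

lemma matrix_sum_ldistrib: "(A::'a::semiring_1^'m^'n) ** (\<Sum>k\<in>S. f k) = (\<Sum>k\<in>S. A ** f k)"
  by (induction S rule: infinite_finite_induct) (simp_all add: matrix_add_ldistrib)

lemma matrix_mult_nth: "(A ** B) $ i $ j = (\<Sum>k\<in>UNIV. A $ i $ k * B $ k $ j)"
  by (simp add: matrix_matrix_mult_def)

lemma trace_uminus: "trace (- A) = - trace (A :: 'a::ring_1^'n^'n)"
  by (simp add: trace_def sum_negf)

lemma trace_scaleR: "trace (c *\<^sub>R A) = c *\<^sub>R trace (A :: 'a::real_algebra_1^'n^'n)"
  by (simp add: trace_def scaleR_sum_right)

lemma trace_sum: "trace (\<Sum>k\<in>S. f k) = (\<Sum>k\<in>S. trace (f k :: 'a::comm_semiring_1^'n^'n))"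
  unfolding trace_def sum_component by (rule sum.swap)

lemma trace_cyclic: "trace ((A::'a::comm_semiring_1^'n^'n) ** B ** C) = trace (B ** C ** A)"
  by (metis matrix_mul_assoc trace_mul_sym)

lemma matrix_inv_eqI:
  fixes A B :: "'a::field^'n^'n"
  assumes "A ** B = mat 1"
  shows "matrix_inv A = B"
proof -
  have "B ** A = mat 1"
    using assms matrix_left_right_inverse by blast
  moreover have "A' = B" if "A' ** A = mat 1" for A'
  proof -
    have "A' = A' ** (A ** B)"
      using assms by simp
    also have "\<dots> = B"
      using that by (simp add: matrix_mul_assoc)
    finally show ?thesis .
  qed
  then show ?thesis
    unfolding matrix_inv_def using assms \<open>B ** A = mat 1\<close> by blast
qed

lemma bij_apply_THE:
  assumes "bij f"
  shows "f (THE x. y = f x) = y"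
proof -
  obtain x where x: "y = f x"
    using bij_is_surj[OF assms] by (metis surjD)
  have "(THE x. y = f x) = x"
    using x bij_is_inj[OF assms] by (auto intro!: the_equality dest: injD)
  then show ?thesis
    using x by simp
qed

section \<open>Positive semidefinite square roots\<close>

lemma linear_coeff_eq_0_if_quadratic_nonneg:
  fixes a b :: real
  assumes "\<And>t. 0 \<le> a * t + b * t\<^sup>2"
  shows "a = 0"
proof (rule ccontr)
  assume "a \<noteq> 0"
  define s where "s = 1 / (\<bar>b\<bar> + 1)"
  have "0 < s" "b * s < 1"
    unfolding s_def by (auto simp: field_simps)
  then have "a\<^sup>2 * s * (b * s - 1) < 0"
    using \<open>a \<noteq> 0\<close> by (simp add: mult_pos_neg)
  moreover have "a * (- a * s) + b * (- a * s)\<^sup>2 = a\<^sup>2 * s * (b * s - 1)"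
    by (simp add: power2_eq_square algebra_simps)
  ultimately show False
    using assms[of "- a * s"] by linarith
qed

lemma rpsd_form_eq_0_imp_mult_eq_0:
  fixes P :: "real^'d^'d"
  assumes P: "rpsd P" and x: "x \<bullet> (P *v x) = 0"
  shows "P *v x = 0"
proof -
  let ?y = "P *v x"
  have swap: "x \<bullet> (P *v ?y) = ?y \<bullet> ?y"
    using inner_symmetric_matrix P by (auto simp: rpsd_def)
  have "0 \<le> (2 * (?y \<bullet> ?y)) * t + (?y \<bullet> (P *v ?y)) * t\<^sup>2" for t
  proof -
    have "0 \<le> (x + t *\<^sub>R ?y) \<bullet> (P *v (x + t *\<^sub>R ?y))"
      using P by (simp add: rpsd_def)
    also have "\<dots> = (2 * (?y \<bullet> ?y)) * t + (?y \<bullet> (P *v ?y)) * t\<^sup>2"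
      using x swap by (simp add: algebra_simps inner_commute
          power2_eq_square)
    finally show ?thesis .
  qed
  then have "2 * (?y \<bullet> ?y) = 0"
    by (rule linear_coeff_eq_0_if_quadratic_nonneg)
  then show ?thesis by simp
qed

lemma symmetric_matrix_square_eq_0:
  fixes U :: "real^'d^'d"
  assumes U: "transpose U = U" and "U ** U = 0"
  shows "U = 0"
proof -
  have "(U *v x) \<bullet> (U *v x) = 0" for x
    using inner_symmetric_matrix[OF U, of "U *v x" x] assms(2)
    by (simp add: matrix_vector_mul_assoc)
  then show ?thesis by (simp add: matrix_eq)
qed

lemma trace_transpose_mult_mult:
  fixes X P :: "real^'d^'d"
  shows "trace (transpose X ** P ** X) = (\<Sum>j\<in>UNIV. column j X \<bullet> (P *v column j X))"
  unfolding trace_def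
  by (simp add: matrix_matrix_mult_def transpose_def column_def inner_vec_def
      matrix_vector_mult_def sum_distrib_left sum_distrib_right mult_ac)
    (subst sum.swap, simp add: mult_ac)

lemma rpsd_anticommuting_symmetric_imp_mult_eq_0:
  fixes P U :: "real^'d^'d"
  assumes P: "rpsd P" and U: "transpose U = U" and anti: "P ** U + U ** P = 0"
  shows "P ** U = 0"
proof -
  have "U ** P ** U + U ** U ** P = 0"
    using arg_cong[OF anti, of "(**) U"] by (simp add: matrix_add_ldistrib matrix_mul_assoc)
  moreover have "trace (U ** U ** P) = trace (U ** P ** U)"
    by (rule trace_cyclic)
  ultimately have "trace (transpose U ** P ** U) = 0"
    using U by (simp add: eq_neg_iff_add_eq_0[symmetric] trace_uminus)
  then have "(\<Sum>j\<in>UNIV. column j U \<bullet> (P *v column j U)) = 0"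
    by (simp add: trace_transpose_mult_mult)
  then have "column j U \<bullet> (P *v column j U) = 0" for j
    using P by (simp add: sum_nonneg_eq_0_iff rpsd_def)
  then have "P *v column j U = 0" for j
    using P rpsd_form_eq_0_imp_mult_eq_0 by blast
  then show ?thesis
    by (simp add: vec_eq_iff matrix_matrix_mult_def matrix_vector_mult_def column_def)
qed

lemma rpsd_square_root_unique:
  fixes S T :: "real^'d^'d"
  assumes S: "rpsd S" and T: "rpsd T" and eq: "S ** S = T ** T"
  shows "S = T"
proof -
  define U where "U = S - T"
  have U: "transpose U = U"
    using S T by (simp add: U_def rpsd_def transpose_def vec_eq_iff)
  have "rpsd (S + T)"
    using S T by (auto simp: rpsd_def transpose_def vec_eq_iff matrix_vector_mult_add_rdistrib
        inner_add_right)
  moreover have "(S + T) ** U + U ** (S + T) = 0"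
    using eq by (simp add: U_def matrix_add_ldistrib matrix_add_rdistrib matrix_diff_ldistrib
        matrix_diff_rdistrib)
  ultimately have PU: "(S + T) ** U = 0"
    using U rpsd_anticommuting_symmetric_imp_mult_eq_0 by blast
  have "U *v (U *v x) = 0" for x
  proof -
    let ?y = "U *v x"
    have "?y \<bullet> (S *v ?y) + ?y \<bullet> (T *v ?y) = 0"
      using arg_cong[OF PU, of "\<lambda>M. ?y \<bullet> (M *v x)"]
      by (simp add: matrix_vector_mul_assoc[symmetric] matrix_vector_mult_add_rdistrib
          inner_add_right)
    then have "?y \<bullet> (S *v ?y) = 0" "?y \<bullet> (T *v ?y) = 0"
      using S T add_nonneg_eq_0_iff by (metis rpsd_def)+
    then have "S *v ?y = 0" "T *v ?y = 0"
      using S T rpsd_form_eq_0_imp_mult_eq_0 by blast+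
    then show ?thesis
      by (simp add: U_def matrix_vector_mult_diff_rdistrib)
  qed
  then have "U ** U = 0"
    by (simp add: matrix_eq matrix_vector_mul_assoc)
  then show ?thesis
    using symmetric_matrix_square_eq_0[OF U] by (simp add: U_def)
qed

lemma symmetric_eigenvector_if_form_maximal:
  fixes A :: "real^'d^'d"
  assumes A: "transpose A = A" and V: "subspace V" "\<forall>z\<in>V. A *v z \<in> V"
    and x: "x \<in> V" "x \<bullet> x = 1"
    and max: "\<And>z. z \<in> V \<Longrightarrow> z \<bullet> (A *v z) \<le> (x \<bullet> (A *v x)) * (z \<bullet> z)"
  shows "A *v x = (x \<bullet> (A *v x)) *\<^sub>R x"
proof -
  define l where "l = x \<bullet> (A *v x)"
  define y where "y = A *v x - l *\<^sub>R x"
  have "y \<in> V"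
    unfolding y_def using V x by (simp add: subspace_diff subspace_scale)
  have xy: "x \<bullet> y = 0"
    using x by (simp add: y_def l_def inner_diff_right)
  have yAx: "y \<bullet> (A *v x) = y \<bullet> y"
    using xy by (simp add: y_def inner_diff_right inner_commute)
  have "0 \<le> (- 2 * (y \<bullet> y)) * t + (l * (y \<bullet> y) - y \<bullet> (A *v y)) * t\<^sup>2" for t
  proof -
    have "x + t *\<^sub>R y \<in> V"
      using V x \<open>y \<in> V\<close> by (simp add: subspace_add subspace_scale)
    from max[OF this] have "l + 2 * t * (y \<bullet> y) + t\<^sup>2 * (y \<bullet> (A *v y)) \<le> l * (1 + t\<^sup>2 * (y \<bullet> y))"
      using x xy yAx inner_symmetric_matrix[OF A, of x y]
      by (simp add: l_def algebra_simps inner_commute power2_eq_square)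
    then show ?thesis by (simp add: algebra_simps)
  qed
  then have "- 2 * (y \<bullet> y) = 0"
    by (rule linear_coeff_eq_0_if_quadratic_nonneg)
  then show ?thesis
    by (simp add: y_def l_def)
qed

lemma symmetric_has_eigenvector_in_invariant_subspace:
  fixes A :: "real^'d^'d"
  assumes A: "transpose A = A" and V: "subspace V" "\<forall>z\<in>V. A *v z \<in> V" "V \<noteq> {0}"
  shows "\<exists>x\<in>V. x \<bullet> x = 1 \<and> A *v x = (x \<bullet> (A *v x)) *\<^sub>R x"
proof -
  define K where "K = sphere 0 1 \<inter> V"
  have "compact K"
    unfolding K_def by (intro compact_Int_closed compact_sphere closed_subspace V)
  moreover obtain y where "y \<in> V" "y \<noteq> 0"
    using V subspace_0 by blast
  then have "y /\<^sub>R norm y \<in> K"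
    using V by (simp add: K_def subspace_scale)
  then have "K \<noteq> {}" by blast
  moreover have "continuous_on K (\<lambda>z. z \<bullet> (A *v z))"
    by (intro continuous_intros matrix_vector_mult_linear_continuous_on)
  ultimately obtain x where "x \<in> K" and xmax: "\<And>z. z \<in> K \<Longrightarrow> z \<bullet> (A *v z) \<le> x \<bullet> (A *v x)"
    using continuous_attains_sup by metis
  then have x: "x \<in> V" "x \<bullet> x = 1"
    by (auto simp: K_def dot_square_norm)
  have "z \<bullet> (A *v z) \<le> (x \<bullet> (A *v x)) * (z \<bullet> z)" if "z \<in> V" for z
  proof (cases "z = 0")
    case False
    then have "z /\<^sub>R norm z \<in> K"
      using V \<open>z \<in> V\<close> by (simp add: K_def subspace_scale)
    from xmax[OF this] False show ?thesis
      by (simp add: matrix_vector_mult_scaleR dot_square_norm field_simps power2_eq_square)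
  qed simp
  then show ?thesis
    using symmetric_eigenvector_if_form_maximal[OF A V(1,2) x] x by blast
qed

definition outer :: "real^'n \<Rightarrow> real^'m \<Rightarrow> real^'m^'n" where
  "outer x y = (\<chi> i j. x $ i * y $ j)"

lemma outer_mult_vector: "outer x y *v z = (y \<bullet> z) *\<^sub>R x"
  by (simp add: outer_def matrix_vector_mult_def inner_vec_def vec_eq_iff sum_distrib_left mult_ac)

lemma rpsd_add_scaled_outer:
  fixes S :: "real^'d^'d"
  assumes S: "rpsd S" and "0 \<le> c"
  shows "rpsd (S + c *\<^sub>R outer x x)"
proof -
  have Ssym: "transpose S = S"
    using S by (simp add: rpsd_def)
  have "transpose (S + c *\<^sub>R outer x x) = S + c *\<^sub>R outer x x"
    using symmetric_matrix_entry[OF Ssym]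
    by (simp add: outer_def transpose_def vec_eq_iff mult.commute)
  moreover have "z \<bullet> ((S + c *\<^sub>R outer x x) *v z) = z \<bullet> (S *v z) + c * (x \<bullet> z)\<^sup>2" for z
    by (simp add: matrix_vector_mult_add_rdistrib scaleR_matrix_vector_assoc[symmetric]
        outer_mult_vector inner_add_right inner_commute power2_eq_square)
  moreover have "0 \<le> z \<bullet> (S *v z) + c * (x \<bullet> z)\<^sup>2" for z
    using assms by (simp add: rpsd_def)
  ultimately show ?thesis
    by (simp add: rpsd_def)
qed

definition psd_root_on :: "(real^'d) set \<Rightarrow> real^'d^'d \<Rightarrow> real^'d^'d \<Rightarrow> bool" where
  "psd_root_on V A S \<longleftrightarrow> rpsd S \<and> (\<forall>x. S *v x \<in> V) \<and> (\<forall>x\<in>V. S *v (S *v x) = A *v x)"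

lemma symmetric_mult_orthogonal_eq_0:
  fixes S :: "real^'d^'d"
  assumes S: "transpose S = S" and range: "\<forall>y. S *v y \<in> V" and x: "\<forall>w\<in>V. x \<bullet> w = 0"
  shows "S *v x = 0"
proof -
  have "(S *v x) \<bullet> (S *v x) = x \<bullet> (S *v (S *v x))"
    using inner_symmetric_matrix[OF S] by simp
  also have "\<dots> = 0"
    using x range by blast
  finally show ?thesis by simp
qed

lemma psd_root_on_extend:
  fixes A S :: "real^'d^'d"
  assumes A: "rpsd A" and V: "subspace V"
    and x: "x \<in> V" "x \<bullet> x = 1" "A *v x = l *\<^sub>R x"
    and S: "psd_root_on {w\<in>V. x \<bullet> w = 0} A S"
  shows "psd_root_on V A (S + sqrt l *\<^sub>R outer x x)"
proof -
  define S' where "S' = S + sqrt l *\<^sub>R outer x x"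
  have "l = x \<bullet> (A *v x)"
    using x by simp
  then have "0 \<le> l"
    using A by (simp add: rpsd_def)
  have S'_mult: "S' *v z = S *v z + (sqrt l * (x \<bullet> z)) *\<^sub>R x" for z
    by (simp add: S'_def matrix_vector_mult_add_rdistrib scaleR_matrix_vector_assoc[symmetric]
        outer_mult_vector)
  have Ssym: "transpose S = S"
    and Srange: "\<And>z. S *v z \<in> V \<and> x \<bullet> (S *v z) = 0"
    and Ssquare: "\<And>z. z \<in> V \<Longrightarrow> x \<bullet> z = 0 \<Longrightarrow> S *v (S *v z) = A *v z"
    using S by (auto simp: psd_root_on_def rpsd_def)
  have "rpsd S'"
    using S \<open>0 \<le> l\<close> by (simp add: S'_def psd_root_on_def rpsd_add_scaled_outer)
  moreover have "S' *v z \<in> V" for z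
    using Srange[of z] x V by (simp add: S'_mult subspace_add subspace_scale)
  moreover have "S' *v (S' *v z) = A *v z" if "z \<in> V" for z
  proof -
    define p where "p = z - (x \<bullet> z) *\<^sub>R x"
    have p: "p \<in> V" "x \<bullet> p = 0"
      using \<open>z \<in> V\<close> x V by (auto simp: p_def subspace_diff subspace_scale inner_diff_right)
    have "S *v x = 0"
      using symmetric_mult_orthogonal_eq_0[OF Ssym, of "{w\<in>V. x \<bullet> w = 0}" x] Srange
      by (simp add: inner_commute)
    then have "S' *v (S' *v x) = A *v x"
      using x \<open>0 \<le> l\<close> by (simp add: S'_mult matrix_vector_mult_scaleR)
    moreover have "S' *v (S' *v p) = A *v p"
      using p Srange[of p] Ssquare by (simp add: S'_mult)
    moreover have "z = p + (x \<bullet> z) *\<^sub>R x"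
      by (simp add: p_def)
    ultimately show ?thesis
      by (metis matrix_vector_right_distrib matrix_vector_mult_scaleR)
  qed
  ultimately show ?thesis
    unfolding S'_def[symmetric] psd_root_on_def by blast
qed

lemma psd_root_on_exists:
  fixes A :: "real^'d^'d"
  assumes A: "rpsd A" and "subspace V" "\<forall>z\<in>V. A *v z \<in> V"
  shows "\<exists>S. psd_root_on V A S"
  using assms(2,3)
proof (induction "dim V" arbitrary: V rule: less_induct)
  case less
  show ?case
  proof (cases "V = {0}")
    case True
    then show ?thesis
      by (intro exI[of _ 0]) (simp add: psd_root_on_def rpsd_def transpose_def vec_eq_iff)
  next
    case False
    have Asym: "transpose A = A"
      using A by (simp add: rpsd_def)
    obtain x where x: "x \<in> V" "x \<bullet> x = 1" "A *v x = (x \<bullet> (A *v x)) *\<^sub>R x"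
      using symmetric_has_eigenvector_in_invariant_subspace[OF Asym less.prems False] by blast
    define W where "W = {w\<in>V. x \<bullet> w = 0}"
    have W: "subspace W"
      using less.prems(1) by (auto simp: W_def subspace_def inner_add_right)
    have "x \<bullet> (A *v w) = 0" if "w \<in> W" for w
      using that by (subst inner_symmetric_matrix[OF Asym], subst x(3)) (simp add: W_def)
    then have "\<forall>w\<in>W. A *v w \<in> W"
      using less.prems(2) by (simp add: W_def)
    moreover have "dim W < dim V"
    proof -
      have "x \<notin> W"
        using x by (simp add: W_def)
      then have "W \<subset> V"
        using x(1) unfolding W_def by blast
      then show ?thesis
        using dim_psubset W less.prems(1) by (metis span_eq_iff)
    qed
    ultimately obtain S where "psd_root_on W A S"
      using less.hyps W by blast
    then show ?thesis
      using psd_root_on_extend[OF A less.prems(1) x] by (auto simp: W_def)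
  qed
qed

lemma rpsd_square_root_exists:
  fixes A :: "real^'d^'d"
  assumes "rpsd A"
  shows "\<exists>S. rpsd S \<and> S ** S = A"
proof -
  obtain S where "psd_root_on UNIV A S"
    using psd_root_on_exists[OF assms subspace_UNIV] by blast
  then show ?thesis
    by (auto simp: psd_root_on_def matrix_eq matrix_vector_mul_assoc)
qed

lemma msqrt:
  fixes A :: "real^'d^'d"
  assumes "rpsd A"
  shows "rpsd (msqrt A)" and "msqrt A ** msqrt A = A"
proof -
  have "\<exists>!S. rpsd S \<and> S ** S = A"
    using rpsd_square_root_exists[OF assms] rpsd_square_root_unique by blast
  then have "rpsd (msqrt A) \<and> msqrt A ** msqrt A = A"
    unfolding msqrt_def by (rule theI')
  then show "rpsd (msqrt A)" and "msqrt A ** msqrt A = A" by blast+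
qed

lemma msqrt_eqI:
  fixes A S :: "real^'d^'d"
  assumes "rpsd S" and "S ** S = A"
  shows "msqrt A = S"
  unfolding msqrt_def using assms rpsd_square_root_unique by blast

lemma rpsd_scaleR: "rpsd (S::real^'d^'d) \<Longrightarrow> 0 \<le> c \<Longrightarrow> rpsd (c *\<^sub>R S)"
  by (auto simp: rpsd_def transpose_scalar scaleR_matrix_vector_assoc[symmetric])

lemma msqrt_scaleR:
  fixes A :: "real^'d^'d"
  assumes "rpsd A" and "0 \<le> c"
  shows "msqrt (c\<^sup>2 *\<^sub>R A) = c *\<^sub>R msqrt A"
  using assms msqrt[OF assms(1)]
  by (intro msqrt_eqI rpsd_scaleR)
    (simp_all add: matrix_scalar_ac scalar_matrix_assoc[symmetric] power2_eq_square)

lemma rpsd_transpose_mult_self: "rpsd (transpose X ** (X::real^'d^'e))"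
proof -
  have "v \<bullet> ((transpose X ** X) *v v) = (X *v v) \<bullet> (X *v v)" for v
    by (simp add: matrix_vector_mul_assoc[symmetric] inner_commute[of v] dot_lmul_matrix)
  then show ?thesis
    by (simp add: rpsd_def matrix_transpose_mul)
qed

lemma mabs_scaleR:
  fixes X :: "real^'d^'d"
  assumes "0 \<le> c"
  shows "mabs (c *\<^sub>R X) = c *\<^sub>R mabs X"
proof -
  have "transpose (c *\<^sub>R X) ** (c *\<^sub>R X) = c\<^sup>2 *\<^sub>R (transpose X ** X)"
    by (simp add: transpose_scalar matrix_scalar_ac scalar_matrix_assoc[symmetric] power2_eq_square)
  then show ?thesis
    unfolding mabs_def using msqrt_scaleR[OF rpsd_transpose_mult_self assms] by simp
qed

lemma trace_nonneg_if_rpsd: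
  fixes S :: "real^'d^'d"
  assumes "rpsd S"
  shows "0 \<le> trace S"
proof -
  have "S $ i $ i = axis i 1 \<bullet> (S *v axis i 1)" for i
    by (simp add: matrix_vector_mult_basis column_def inner_axis inner_commute[of "axis _ _"])
  then show ?thesis
    using assms by (simp add: trace_def sum_nonneg rpsd_def)
qed

lemma trace_mabs_nonneg: "0 \<le> trace (mabs (X::real^'d^'d))"
  unfolding mabs_def using msqrt(1)[OF rpsd_transpose_mult_self] by (rule trace_nonneg_if_rpsd)

lemma rposdef_form_pos_iff: "rposdef G \<Longrightarrow> 0 < x \<bullet> (G *v x) \<longleftrightarrow> x \<noteq> 0"
  by (auto simp: rposdef_def)

lemma rposdef_form_nonneg: "rposdef G \<Longrightarrow> 0 \<le> x \<bullet> (G *v x)"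
  by (cases "x = 0") (auto simp: rposdef_def less_imp_le)

section \<open>Complex matrices\<close>

text \<open>Complex matrices form only a real vector space in the library; \<open>cscale\<close> supplies the
  complex scalar multiplication.\<close>

definition cscale :: "complex \<Rightarrow> complex^'m^'n \<Rightarrow> complex^'m^'n" where
  "cscale c X = map_matrix ((*) c) X"

lemma cscale_nth [simp]: "cscale c X $ i $ j = c * X $ i $ j"
  by (simp add: cscale_def)

lemma scaleR_eq_cscale: "r *\<^sub>R X = cscale (complex_of_real r) X"
  unfolding vec_eq_iff by (simp add: scaleR_conv_of_real[where 'a = complex])

lemma cscale_cscale [simp]: "cscale c (cscale d X) = cscale (c * d) X"
  by (simp add: vec_eq_iff)

lemma cscale_add_right: "cscale c (X + Y) = cscale c X + cscale c Y"
  by (simp add: vec_eq_iff distrib_left)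

lemma matrix_cscale_left: "cscale c A ** B = cscale c (A ** B)"
  by (simp add: matrix_matrix_mult_def vec_eq_iff sum_distrib_left mult_ac)

lemma matrix_cscale_right: "A ** cscale c B = cscale c (A ** B)"
  by (simp add: matrix_matrix_mult_def vec_eq_iff sum_distrib_left mult_ac)

lemma trace_cscale: "trace (cscale c X) = c * trace X"
  by (simp add: trace_def sum_distrib_left)

lemma cstar_cstar [simp]: "cstar (cstar A) = A"
  by (simp add: cstar_def vec_eq_iff)

lemma cstar_mult: "cstar (A ** B) = cstar B ** cstar (A::complex^'n^'n)"
  by (simp add: cstar_def matrix_matrix_mult_def vec_eq_iff mult.commute)

lemma cnj_trace: "cnj (trace A) = trace (cstar (A::complex^'n^'n))"
  by (simp add: trace_def cstar_def)

lemma trace_cstar_mult_mult: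
  "trace (cstar L ** \<rho> ** L) = (\<Sum>j\<in>UNIV. cinner (column j L) (\<rho> *v column j L))"
  unfolding trace_def
  by (simp add: cstar_def matrix_matrix_mult_def cinner_def column_def matrix_vector_mult_def
      sum_distrib_left sum_distrib_right mult_ac) (subst sum.swap, simp add: mult_ac)

lemma strictly_pos_form_nonneg: "strictly_pos \<rho> \<Longrightarrow> 0 \<le> Re (cinner v (\<rho> *v v))"
  by (cases "v = 0") (auto simp: strictly_pos_def cinner_def intro: less_imp_le)

lemma trace_cstar_mult_mult_nonneg:
  "strictly_pos \<rho> \<Longrightarrow> 0 \<le> Re (trace (cstar L ** \<rho> ** L))"
  by (simp add: trace_cstar_mult_mult Re_sum sum_nonneg strictly_pos_form_nonneg)

lemma trace_cstar_mult_mult_eq_0: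
  assumes \<rho>: "strictly_pos \<rho>" and "Re (trace (cstar L ** \<rho> ** L)) = 0"
  shows "L = 0"
proof -
  have "Re (cinner (column j L) (\<rho> *v column j L)) = 0" for j
    using assms by (simp add: trace_cstar_mult_mult Re_sum sum_nonneg_eq_0_iff
        strictly_pos_form_nonneg)
  then have "column j L = 0" for j
    using \<rho> by (auto simp: strictly_pos_def)
  then show ?thesis
    by (simp add: vec_eq_iff column_def)
qed

lemma of_real_outer_eq_0_iff: "map_matrix complex_of_real (outer x x) = 0 \<longleftrightarrow> x = 0"
  by (auto simp: outer_def vec_eq_iff)

lemma trace_of_real_mult_outer:
  "Re (trace (map_matrix complex_of_real G ** map_matrix complex_of_real (outer x x)))
    = x \<bullet> (G *v x)"
  by (simp add: outer_def trace_def matrix_matrix_mult_def Re_sum inner_vec_def matrix_vector_mult_def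
      sum_distrib_left mult_ac)

section \<open>The logarithmic-derivative map and the SLD inner product\<close>

definition logder_map :: "real \<Rightarrow> complex^'n^'n \<Rightarrow> complex^'n^'n \<Rightarrow> complex^'n^'n" where
  "logder_map \<beta> \<rho> L = ((1 + \<beta>) / 2) *\<^sub>R (\<rho> ** L) + ((1 - \<beta>) / 2) *\<^sub>R (L ** \<rho>)"

lemma linear_logder_map: "linear (logder_map \<beta> \<rho>)"
  by (intro linearI)
    (simp_all add: logder_map_def matrix_add_ldistrib matrix_add_rdistrib matrix_scalar_ac
      scalar_matrix_assoc[symmetric] scaleR_add_right mult.commute)

lemma logder_map_sum: "logder_map \<beta> \<rho> (\<Sum>k\<in>S. f k) = (\<Sum>k\<in>S. logder_map \<beta> \<rho> (f k))"
  by (rule linear_sum[OF linear_logder_map])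

lemma logder_map_cscale: "logder_map \<beta> \<rho> (cscale c X) = cscale c (logder_map \<beta> \<rho> X)"
  by (simp add: logder_map_def scaleR_eq_cscale matrix_cscale_left matrix_cscale_right
      cscale_add_right mult.commute)

lemma logder_map_eq_0_imp:
  assumes \<rho>: "strictly_pos \<rho>" and \<beta>: "0 \<le> \<beta>" "\<beta> \<le> 1" and "logder_map \<beta> \<rho> L = 0"
  shows "L = 0"
proof -
  have "trace (cstar L ** logder_map \<beta> \<rho> L) = 0"
    using assms(4) by (simp add: trace_def)
  then have tr: "((1 + \<beta>) / 2) *\<^sub>R trace (cstar L ** \<rho> ** L)
      + ((1 - \<beta>) / 2) *\<^sub>R trace (cstar (cstar L) ** \<rho> ** cstar L) = 0"
    by (simp add: logder_map_def matrix_add_ldistrib matrix_scalar_ac scalar_matrix_assoc[symmetric]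
        trace_add trace_scaleR matrix_mul_assoc trace_cyclic[of "cstar L" L \<rho>])
  have "((1 + \<beta>) / 2) * Re (trace (cstar L ** \<rho> ** L))
      + ((1 - \<beta>) / 2) * Re (trace (cstar (cstar L) ** \<rho> ** cstar L)) = 0"
    using arg_cong[OF tr, of Re] by simp
  moreover have "0 \<le> ((1 - \<beta>) / 2) * Re (trace (cstar (cstar L) ** \<rho> ** cstar L))"
    using \<beta> trace_cstar_mult_mult_nonneg[OF \<rho>, of "cstar L"] by simp
  moreover have "0 \<le> ((1 + \<beta>) / 2) * Re (trace (cstar L ** \<rho> ** L))"
    using \<beta> trace_cstar_mult_mult_nonneg[OF \<rho>, of L] by simp
  ultimately have "((1 + \<beta>) / 2) * Re (trace (cstar L ** \<rho> ** L)) = 0"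
    by linarith
  then have "Re (trace (cstar L ** \<rho> ** L)) = 0"
    using \<beta> by simp
  then show ?thesis
    using trace_cstar_mult_mult_eq_0[OF \<rho>] by blast
qed

lemma logder_map_bij:
  assumes "strictly_pos \<rho>" and "0 \<le> \<beta>" "\<beta> \<le> 1"
  shows "bij (logder_map \<beta> \<rho>)"
proof -
  have "inj (logder_map \<beta> \<rho>)"
    using logder_map_eq_0_imp[OF assms] linear_logder_map
    by (simp add: linear_injective_0[OF linear_logder_map])
  then show ?thesis
    using linear_injective_imp_surjective[OF linear_logder_map] by (simp add: bij_def)
qed

lemma logder_map_logder:
  assumes "strictly_pos \<rho>" and "0 \<le> \<beta>" "\<beta> \<le> 1"
  shows "logder_map \<beta> \<rho> (logder \<beta> \<rho> D) = D"
  unfolding logder_def logder_map_def[symmetric] using logder_map_bij[OF assms] by (rule bij_apply_THE)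

lemma logder_map_commop:
  assumes "strictly_pos \<rho>"
  shows "logder_map 0 \<rho> (commop \<rho> X) = cscale (\<i> / 2) (X ** \<rho> - \<rho> ** X)"
proof -
  let ?R = "cscale \<i> (X ** \<rho> - \<rho> ** X)"
  have "?R = 2 *\<^sub>R cscale (\<i> / 2) (X ** \<rho> - \<rho> ** X)"
    by (simp add: scaleR_eq_cscale)
  moreover have "Y ** \<rho> + \<rho> ** Y = 2 *\<^sub>R logder_map 0 \<rho> Y" for Y
    by (simp add: logder_map_def scaleR_add_right add.commute)
  ultimately have iff: "Y ** \<rho> + \<rho> ** Y = ?R
      \<longleftrightarrow> cscale (\<i> / 2) (X ** \<rho> - \<rho> ** X) = logder_map 0 \<rho> Y" for Y
    by auto
  show ?thesis
    unfolding commop_def cscale_def[symmetric] iff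
    using logder_map_bij[OF assms order_refl zero_le_one] by (rule bij_apply_THE)
qed

lemma logder_map_eq_sld_plus_commop:
  assumes "strictly_pos \<rho>"
  shows "logder_map \<beta> \<rho> X
    = logder_map 0 \<rho> X + cscale (\<i> * complex_of_real \<beta>) (logder_map 0 \<rho> (commop \<rho> X))"
  by (simp add: logder_map_commop[OF assms])
    (auto simp: logder_map_def vec_eq_iff scaleR_conv_of_real[where 'a = complex] field_simps)

definition sld_inner :: "complex^'n^'n \<Rightarrow> complex^'n^'n \<Rightarrow> complex^'n^'n \<Rightarrow> complex" where
  "sld_inner \<rho> X Y = trace (logder_map 0 \<rho> X ** Y)"

lemma sld_inner_expand: "sld_inner \<rho> X Y = (trace (\<rho> ** X ** Y) + trace (X ** \<rho> ** Y)) / 2"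
  by (simp add: sld_inner_def logder_map_def matrix_add_rdistrib scalar_matrix_assoc[symmetric]
      trace_add trace_scaleR scaleR_conv_of_real[where 'a = complex] field_simps)

lemma sld_inner_commute: "sld_inner \<rho> X Y = sld_inner \<rho> Y X"
  by (simp add: sld_inner_expand trace_cyclic[of \<rho> Y X] trace_cyclic[of Y \<rho> X]
      trace_cyclic[of X \<rho> Y] add.commute)

lemma linear_sld_inner: "linear (\<lambda>Y. Re (sld_inner \<rho> X Y))"
  by (intro linearI)
    (simp_all add: sld_inner_def matrix_add_ldistrib matrix_scalar_ac scalar_matrix_assoc[symmetric]
      trace_add trace_scaleR)

lemma sld_inner_cscale: "sld_inner \<rho> X (cscale c Y) = c * sld_inner \<rho> X Y"
  by (simp add: sld_inner_def matrix_cscale_right trace_cscale)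

lemma sld_inner_diff: "sld_inner \<rho> X (Y - Z) = sld_inner \<rho> X Y - sld_inner \<rho> X Z"
  by (simp add: sld_inner_def matrix_diff_ldistrib trace_sub)

lemma sld_inner_real:
  assumes "hermitian \<rho>" "hermitian X" "hermitian Y"
  shows "sld_inner \<rho> X Y = complex_of_real (Re (sld_inner \<rho> X Y))"
proof -
  have "cnj (trace (\<rho> ** X ** Y)) = trace (X ** \<rho> ** Y)"
    and "cnj (trace (X ** \<rho> ** Y)) = trace (\<rho> ** X ** Y)"
    using assms by (simp_all add: cnj_trace cstar_mult hermitian_def matrix_mul_assoc
        trace_cyclic[of Y])
  then have "cnj (sld_inner \<rho> X Y) = sld_inner \<rho> X Y"
    by (simp add: sld_inner_expand add.commute)
  then show ?thesis
    by (metis Reals_cnj_iff complex_is_Real_iff of_real_Re)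
qed

lemma sld_inner_self:
  assumes "hermitian \<rho>" "hermitian X"
  shows "sld_inner \<rho> X X = trace (cstar X ** \<rho> ** X)"
  using assms by (simp add: sld_inner_expand hermitian_def trace_cyclic[of X \<rho> X])

lemma sld_inner_commop:
  assumes "strictly_pos \<rho>"
  shows "sld_inner \<rho> (commop \<rho> X) Y = - sld_inner \<rho> X (commop \<rho> Y)"
proof -
  have "sld_inner \<rho> (commop \<rho> X) Y = (\<i> / 2) * (trace (X ** \<rho> ** Y) - trace (\<rho> ** X ** Y))"
    and "sld_inner \<rho> (commop \<rho> Y) X = (\<i> / 2) * (trace (\<rho> ** X ** Y) - trace (X ** \<rho> ** Y))"
    by (simp_all add: sld_inner_def logder_map_commop[OF assms] matrix_cscale_left trace_cscale
        matrix_diff_rdistrib trace_sub trace_cyclic[of Y] trace_cyclic[of \<rho> Y])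
  moreover have "sld_inner \<rho> X (commop \<rho> Y) = sld_inner \<rho> (commop \<rho> Y) X"
    by (rule sld_inner_commute)
  ultimately show ?thesis
    by (metis minus_diff_eq mult_minus_right)
qed

section \<open>A commutation-invariant extension of the SLD tangent space\<close>

locale commop_invariant_extension =
  fixes \<rho> :: "complex^'n::finite^'n" and L :: "'d::finite \<Rightarrow> complex^'n^'n"
    and T :: "(complex^'n^'n) set"
  assumes pos: "strictly_pos \<rho>"
    and indep: "\<forall>c::'d \<Rightarrow> real. (\<Sum>i\<in>UNIV. c i *\<^sub>R L i) = 0 \<longrightarrow> (\<forall>i. c i = 0)"
    and T_subspace: "subspace T" and T_dim: "dim T = CARD('d) + 1"
    and T_hermitian: "\<forall>X\<in>T. hermitian X"
    and L_in_T: "\<And>i. L i \<in> T"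
    and commop_in_T: "\<And>X. X \<in> T \<Longrightarrow> commop \<rho> X \<in> T"
begin

definition ip :: "complex^'n^'n \<Rightarrow> complex^'n^'n \<Rightarrow> real" where
  "ip X Y = Re (sld_inner \<rho> X Y)"

lemma ip_commute: "ip X Y = ip Y X"
  by (simp add: ip_def sld_inner_commute)

lemma linear_ip: "linear (ip X)"
  unfolding ip_def by (rule linear_sld_inner)

lemmas ip_add_right = linear_add[OF linear_ip]
  and ip_scaleR_right = linear_scale[OF linear_ip]
  and ip_sum_right = linear_sum[OF linear_ip]

lemma ip_scaleR_left: "ip (c *\<^sub>R X) Y = c * ip X Y"
  by (simp add: ip_commute[of _ Y] ip_scaleR_right)

lemma ip_sum_left: "ip (\<Sum>k\<in>S. f k) Y = (\<Sum>k\<in>S. ip (f k) Y)"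
  by (simp add: ip_commute[of _ Y] ip_sum_right)

lemma sld_inner_eq_ip: "X \<in> T \<Longrightarrow> Y \<in> T \<Longrightarrow> sld_inner \<rho> X Y = complex_of_real (ip X Y)"
  unfolding ip_def using sld_inner_real pos T_hermitian by (auto simp: strictly_pos_def)

lemma ip_self: "X \<in> T \<Longrightarrow> ip X X = Re (trace (cstar X ** \<rho> ** X))"
  using pos T_hermitian by (simp add: ip_def sld_inner_self strictly_pos_def)

lemma ip_self_eq_0_imp: "X \<in> T \<Longrightarrow> ip X X = 0 \<Longrightarrow> X = 0"
  using trace_cstar_mult_mult_eq_0[OF pos] by (simp add: ip_self)

lemma ip_self_pos:
  assumes "X \<in> T" "X \<noteq> 0"
  shows "0 < ip X X"
proof -
  have "0 \<le> ip X X"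
    using assms trace_cstar_mult_mult_nonneg[OF pos, of X] by (simp add: ip_self)
  moreover have "ip X X \<noteq> 0"
    using assms ip_self_eq_0_imp by blast
  ultimately show ?thesis by simp
qed

lemma ip_commop: "ip (commop \<rho> X) Y = - ip X (commop \<rho> Y)"
  by (simp add: ip_def sld_inner_commop[OF pos])

lemma combination_in_T: "(\<Sum>i\<in>UNIV. c i *\<^sub>R L i) \<in> T"
  by (intro subspace_sum T_subspace subspace_scale L_in_T)

definition gram :: "real^'d^'d" where
  "gram = (\<chi> i j. ip (L i) (L j))"

definition gram_inv :: "real^'d^'d" where
  "gram_inv = matrix_inv gram"

lemma gram_mult_gram_inv: "gram ** gram_inv = mat 1"
proof -
  have "c = 0" if "gram *v c = 0" for c
  proof -
    define X where "X = (\<Sum>j\<in>UNIV. c $ j *\<^sub>R L j)"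
    have "c \<bullet> (gram *v c) = ip X X"
      by (simp add: X_def gram_def inner_vec_def matrix_vector_mult_def ip_sum_left ip_sum_right
          ip_scaleR_left ip_scaleR_right sum_distrib_left mult_ac ip_commute)
    then have "X = 0"
      using that ip_self_eq_0_imp combination_in_T by (simp add: X_def)
    then show ?thesis
      using indep by (simp add: X_def vec_eq_iff)
  qed
  then have "inj ((*v) gram)"
    by (simp add: vec.inj_iff_eq_0)
  then obtain B where "B ** gram = mat 1"
    using matrix_left_invertible_injective by blast
  then have "gram ** B = mat 1"
    using matrix_left_right_inverse by blast
  then show ?thesis
    unfolding gram_inv_def using matrix_inv_eqI by metis
qed

definition dual :: "'d \<Rightarrow> complex^'n^'n" where
  "dual j = (\<Sum>k\<in>UNIV. gram_inv $ k $ j *\<^sub>R L k)"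

lemma dual_in_T: "dual j \<in> T"
  unfolding dual_def by (rule combination_in_T)

lemma ip_dual_L: "ip (dual j) (L i) = of_bool (i = j)"
proof -
  have "ip (dual j) (L i) = (gram ** gram_inv) $ i $ j"
    by (simp add: dual_def ip_sum_left ip_scaleR_left gram_def matrix_matrix_mult_def
        ip_commute[of "L i"] mult.commute)
  then show ?thesis
    by (simp add: gram_mult_gram_inv mat_def)
qed

lemma exists_normal: "\<exists>X\<in>T. X \<noteq> 0 \<and> (\<forall>i. ip (L i) X = 0)"
proof (rule ccontr)
  define coords where "coords X = (\<chi> i. ip (L i) X)" for X
  have lin: "linear coords"
    by (intro linearI) (simp_all add: coords_def vec_eq_iff ip_add_right ip_scaleR_right)
  assume "\<not> ?thesis"
  then have "X = 0" if "X \<in> T" "coords X = 0" for X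
    using that by (auto simp: coords_def vec_eq_iff)
  then have "inj_on coords T"
    by (simp add: linear_inj_on_iff_eq_0[OF lin T_subspace])
  then have "dim (coords ` T) = dim T"
    using dim_image_eq[OF lin] by (simp add: span_eq_iff[THEN iffD2, OF T_subspace])
  moreover have "dim (coords ` T) \<le> CARD('d)"
    using dim_subset_UNIV[of "coords ` T"] by simp
  ultimately show False
    using T_dim by simp
qed

definition normal :: "complex^'n^'n" where
  "normal = (SOME N. N \<in> T \<and> ip N N = 1 \<and> (\<forall>i. ip (L i) N = 0))"

lemma normal: "normal \<in> T" "ip normal normal = 1" "ip (L i) normal = 0"
proof -
  obtain X where X: "X \<in> T" "X \<noteq> 0" "\<forall>i. ip (L i) X = 0"
    using exists_normal by blast
  define N where "N = (1 / sqrt (ip X X)) *\<^sub>R X"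
  have "N \<in> T \<and> ip N N = 1 \<and> (\<forall>i. ip (L i) N = 0)"
    using X ip_self_pos[OF X(1,2)] T_subspace
    by (simp add: N_def subspace_scale ip_scaleR_left ip_scaleR_right real_sqrt_mult[symmetric])
  then have "normal \<in> T \<and> ip normal normal = 1 \<and> (\<forall>i. ip (L i) normal = 0)"
    unfolding normal_def by (rule someI)
  then show "normal \<in> T" "ip normal normal = 1" "ip (L i) normal = 0"
    by blast+
qed

lemma ip_normal_L: "ip normal (L i) = 0"
  using normal(3) ip_commute by metis

lemma ip_dual_normal: "ip (dual j) normal = 0"
  by (simp add: dual_def ip_sum_left ip_scaleR_left normal)

lemma T_decomposition:
  assumes "Y \<in> T"
  shows "Y = (\<Sum>m\<in>UNIV. ip (dual m) Y *\<^sub>R L m) + ip normal Y *\<^sub>R normal"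
proof -
  define comb :: "(real^'d) \<times> real \<Rightarrow> complex^'n^'n"
    where "comb p = (\<Sum>m\<in>UNIV. fst p $ m *\<^sub>R L m) + snd p *\<^sub>R normal" for p
  have lin: "linear comb"
    by (intro linearI) (simp_all add: comb_def scaleR_add_left scaleR_add_right sum.distrib
        scaleR_sum_right algebra_simps)
  have coeffs: "ip (dual j) (comb p) = fst p $ j" "ip normal (comb p) = snd p" for p j
    by (simp_all add: comb_def ip_add_right ip_sum_right ip_scaleR_right ip_dual_L ip_dual_normal
        normal ip_normal_L)
  have "inj comb"
  proof (rule injI)
    fix p q assume "comb p = comb q"
    then have "fst p $ j = fst q $ j" "snd p = snd q" for j
      using coeffs by metis+
    then show "p = q"
      by (simp add: prod_eq_iff vec_eq_iff)
  qed
  then have "dim (range comb) = CARD('d) + 1"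
    using dim_image_eq[OF lin, of UNIV] by (simp add: inj_on_def)
  moreover have "range comb \<subseteq> T"
    using T_subspace normal(1) L_in_T
    by (auto simp: comb_def intro!: subspace_add subspace_sum subspace_scale)
  moreover have "subspace (range comb)"
    using linear_subspace_image[OF lin subspace_UNIV] .
  ultimately have "span (range comb) = span T"
    using T_dim dim_eq_span[of "range comb" T] by simp
  then have "range comb = T"
    using span_eq_iff T_subspace \<open>subspace (range comb)\<close> by metis
  then obtain p where "Y = comb p"
    using assms by blast
  then show ?thesis
    using coeffs by (simp add: comb_def)
qed

definition commop_coord :: "real^'d^'d" where
  "commop_coord = (\<chi> m j. ip (dual m) (commop \<rho> (dual j)))"

definition commop_normal_coord :: "real^'d" where
  "commop_normal_coord = (\<chi> j. ip normal (commop \<rho> (dual j)))"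

lemma commop_dual:
  "commop \<rho> (dual j)
    = (\<Sum>m\<in>UNIV. commop_coord $ m $ j *\<^sub>R L m) + commop_normal_coord $ j *\<^sub>R normal"
  using T_decomposition[OF commop_in_T[OF dual_in_T]]
  by (simp add: commop_coord_def commop_normal_coord_def)

lemma commop_normal: "commop \<rho> normal = - (\<Sum>m\<in>UNIV. commop_normal_coord $ m *\<^sub>R L m)"
proof -
  have "ip normal (commop \<rho> normal) = 0"
    using ip_commop[of normal normal] ip_commute[of normal] by simp
  moreover have "ip (dual m) (commop \<rho> normal) = - commop_normal_coord $ m" for m
    using ip_commop[of "dual m" normal] ip_commute[of normal]
    by (simp add: commop_normal_coord_def ip_commute[of "dual m"])
  ultimately show ?thesis
    using T_decomposition[OF commop_in_T[OF normal(1)]] by (simp add: sum_negf)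
qed

definition drho :: "'d \<Rightarrow> complex^'n^'n" where
  "drho k = logder_map 0 \<rho> (L k)"

definition fisher_inverse :: "real \<Rightarrow> complex^'d^'d" where
  "fisher_inverse \<beta> = (\<chi> m j.
     complex_of_real (gram_inv $ m $ j - \<beta>\<^sup>2 * commop_normal_coord $ m * commop_normal_coord $ j)
     + \<i> * complex_of_real (\<beta> * commop_coord $ m $ j))"

lemma logder_map_shifted_dual:
  defines "v \<equiv> commop_normal_coord"
  shows "logder_map \<beta> \<rho> (dual j - cscale (\<i> * \<beta> * v $ j) normal)
    = (\<Sum>m\<in>UNIV. cscale (fisher_inverse \<beta> $ m $ j) (logder_map 0 \<rho> (L m)))"
proof -
  let ?E = "logder_map 0 \<rho>"
  have E_dual: "?E (dual j) = (\<Sum>m\<in>UNIV. cscale (gram_inv $ m $ j) (?E (L m)))"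
    by (simp add: dual_def logder_map_sum scaleR_eq_cscale logder_map_cscale)
  have E_commop_dual: "?E (commop \<rho> (dual j))
      = (\<Sum>m\<in>UNIV. cscale (commop_coord $ m $ j) (?E (L m))) + cscale (v $ j) (?E normal)"
    by (simp add: commop_dual v_def logder_map_sum linear_add[OF linear_logder_map]
        scaleR_eq_cscale logder_map_cscale)
  have E_commop_normal: "?E (commop \<rho> normal) = - (\<Sum>m\<in>UNIV. cscale (v $ m) (?E (L m)))"
    by (simp add: commop_normal v_def logder_map_sum linear_neg[OF linear_logder_map]
        scaleR_eq_cscale logder_map_cscale)
  show ?thesis
    by (simp add: linear_diff[OF linear_logder_map] logder_map_cscale
        logder_map_eq_sld_plus_commop[OF pos, of \<beta>] E_dual E_commop_dual E_commop_normal
        vec_eq_iff sum_component fisher_inverse_def v_def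
        sum.distrib sum_subtractf sum_negf sum_distrib_left algebra_simps power2_eq_square)
qed

lemma Jmat_mult_fisher_inverse:
  assumes \<beta>: "0 \<le> \<beta>" "\<beta> \<le> 1"
  shows "Jmat \<beta> \<rho> drho ** fisher_inverse \<beta> = mat 1"
proof -
  define Z where "Z j = dual j - cscale (\<i> * \<beta> * commop_normal_coord $ j) normal" for j
  have Z: "(\<Sum>m\<in>UNIV. cscale (fisher_inverse \<beta> $ m $ j) (logder \<beta> \<rho> (drho m))) = Z j" for j
  proof -
    have "logder_map \<beta> \<rho> (\<Sum>m\<in>UNIV. cscale (fisher_inverse \<beta> $ m $ j) (logder \<beta> \<rho> (drho m)))
        = logder_map \<beta> \<rho> (Z j)"
      by (simp add: logder_map_sum logder_map_cscale logder_map_logder[OF pos \<beta>] Z_def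
          logder_map_shifted_dual drho_def)
    then show ?thesis
      using logder_map_bij[OF pos \<beta>] by (simp add: bij_def inj_eq)
  qed
  have "(Jmat \<beta> \<rho> drho ** fisher_inverse \<beta>) $ i $ j = of_bool (i = j)" for i j
  proof -
    have "(Jmat \<beta> \<rho> drho ** fisher_inverse \<beta>) $ i $ j
        = trace (drho i ** (\<Sum>m\<in>UNIV. cscale (fisher_inverse \<beta> $ m $ j) (logder \<beta> \<rho> (drho m))))"
      by (simp add: Jmat_def matrix_mult_nth matrix_sum_ldistrib matrix_cscale_right
          trace_sum trace_cscale mult.commute)
    also have "\<dots> = sld_inner \<rho> (L i) (Z j)"
      unfolding Z by (simp add: sld_inner_def drho_def)
    also have "\<dots> = of_bool (i = j)"
      by (simp add: Z_def sld_inner_diff sld_inner_cscale sld_inner_eq_ip L_in_T dual_in_T normal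
          ip_commute[of "L i"] ip_dual_L)
    finally show ?thesis .
  qed
  then show ?thesis
    by (simp add: vec_eq_iff mat_def)
qed

lemma inverse_Jmat:
  assumes "0 \<le> \<beta>" "\<beta> \<le> 1"
  shows "matrix_inv (Jmat \<beta> \<rho> drho) = fisher_inverse \<beta>"
  using Jmat_mult_fisher_inverse[OF assms] by (rule matrix_inv_eqI)

lemma Cbound_eq_quadratic:
  assumes "0 \<le> \<beta>" "\<beta> \<le> 1"
  shows "Cbound \<beta> \<rho> drho G = trace (G ** gram_inv)
    - \<beta>\<^sup>2 * (commop_normal_coord \<bullet> (G *v commop_normal_coord))
    + \<beta> * trace (mabs (msqrt G ** commop_coord ** msqrt G))"
proof -
  have "Re (trace (map_matrix complex_of_real G ** fisher_inverse \<beta>))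
      = trace (G ** gram_inv) - \<beta>\<^sup>2 * (commop_normal_coord \<bullet> (G *v commop_normal_coord))"
    by (simp add: trace_def matrix_matrix_mult_def Re_sum fisher_inverse_def inner_vec_def
        matrix_vector_mult_def sum_subtractf sum_distrib_left right_diff_distrib mult_ac)
  moreover have "Im_mat (fisher_inverse \<beta>) = \<beta> *\<^sub>R commop_coord"
    by (simp add: Im_mat_def fisher_inverse_def vec_eq_iff)
  then have "msqrt G ** Im_mat (fisher_inverse \<beta>) ** msqrt G
      = \<beta> *\<^sub>R (msqrt G ** commop_coord ** msqrt G)"
    by (simp add: matrix_scalar_ac scalar_matrix_assoc[symmetric])
  ultimately show ?thesis
    using assms by (simp add: Cbound_def inverse_Jmat mabs_scaleR trace_scaleR)
qed

lemma sld_minus_real_rld_inverse: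
  "matrix_inv (Jmat 0 \<rho> drho) - map_matrix complex_of_real (Re_mat (matrix_inv (Jmat 1 \<rho> drho)))
    = map_matrix complex_of_real (outer commop_normal_coord commop_normal_coord)"
  by (simp add: inverse_Jmat Re_mat_def fisher_inverse_def outer_def vec_eq_iff)

lemma sld_inverse_eq_real_rld_inverse_iff:
  "matrix_inv (Jmat 0 \<rho> drho) = map_matrix complex_of_real (Re_mat (matrix_inv (Jmat 1 \<rho> drho)))
    \<longleftrightarrow> commop_normal_coord = 0"
  using sld_minus_real_rld_inverse of_real_outer_eq_0_iff by (metis eq_iff_diff_eq_0)

lemma Im_rld_inverse: "Im_mat (matrix_inv (Jmat 1 \<rho> drho)) = commop_coord"
  by (simp add: inverse_Jmat Im_mat_def fisher_inverse_def vec_eq_iff)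
end

section \<open>Maximising the bound\<close>

lemma concave_quadratic_max_on_unit_interval:
  fixes f :: "real \<Rightarrow> real"
  assumes f: "\<And>b. 0 \<le> b \<Longrightarrow> b \<le> 1 \<Longrightarrow> f b = t - b\<^sup>2 * q + b * c"
    and c: "0 \<le> c" and q: "0 \<le> q"
  defines "m \<equiv> if 0 < q \<and> c / (2 * q) < 1 then f (c / (2 * q)) else f 1"
  shows "(\<forall>b\<in>{0..1}. f b \<le> m) \<and> m \<in> f ` {0..1}"
proof (cases "0 < q \<and> c / (2 * q) < 1")
  case True
  define b0 where "b0 = c / (2 * q)"
  have b0: "0 \<le> b0" "b0 \<le> 1" "c = 2 * q * b0"
    using True c by (auto simp: b0_def)
  have "f b0 - f b = q * (b - b0)\<^sup>2" if "0 \<le> b" "b \<le> 1" for b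
    using that b0 by (simp add: f power2_eq_square algebra_simps)
  then have "f b \<le> f b0" if "0 \<le> b" "b \<le> 1" for b
    using that q by (metis diff_ge_0_iff_ge zero_le_mult_iff zero_le_power2)
  moreover have "m = f b0"
    using True by (simp add: m_def b0_def)
  ultimately show ?thesis
    using b0 by auto
next
  case False
  have "f b \<le> f 1" if "0 \<le> b" "b \<le> 1" for b
  proof -
    have "q * (1 + b) \<le> c"
    proof (cases "q = 0")
      case False
      then have "2 * q \<le> c"
        using \<open>\<not> (0 < q \<and> c / (2 * q) < 1)\<close> q by (simp add: le_divide_eq)
      moreover have "q * (1 + b) \<le> q * 2"
        using that q by (intro mult_left_mono) auto
      ultimately show ?thesis by linarith
    qed (simp add: c)
    then have "0 \<le> (1 - b) * (c - q * (1 + b))"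
      using that by simp
    moreover have "f 1 - f b = (1 - b) * (c - q * (1 + b))"
      using that by (simp add: f power2_eq_square algebra_simps)
    ultimately show ?thesis by linarith
  qed
  then show ?thesis
    using False by (auto simp: m_def)
qed

theorem theorem6:
  fixes \<rho>\<^sub>f :: "real^'d::finite \<Rightarrow> complex^'n::finite^'n"
    and \<Theta> :: "(real^'d) set"
    and \<theta>\<^sub>0 :: "real^'d"
    and G :: "real^'d^'d"
  assumes "open \<Theta>" and "\<theta>\<^sub>0 \<in> \<Theta>"
    and "\<forall>\<theta>\<in>\<Theta>. density_op (\<rho>\<^sub>f \<theta>)"
    and "smooth_on \<rho>\<^sub>f \<Theta>"
    and "strictly_pos (\<rho>\<^sub>f \<theta>\<^sub>0)"
    and "\<forall>c::'d \<Rightarrow> real. (\<Sum>i\<in>UNIV. c i *\<^sub>R logder 0 (\<rho>\<^sub>f \<theta>\<^sub>0) (partial i \<rho>\<^sub>f \<theta>\<^sub>0)) = 0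
            \<longrightarrow> (\<forall>i. c i = 0)"
    and "\<exists>T :: (complex^'n^'n) set. subspace T \<and> dim T = CARD('d) + 1
            \<and> (\<forall>X\<in>T. hermitian X)
            \<and> span (range (\<lambda>i. logder 0 (\<rho>\<^sub>f \<theta>\<^sub>0) (partial i \<rho>\<^sub>f \<theta>\<^sub>0))) \<subseteq> T
            \<and> commop (\<rho>\<^sub>f \<theta>\<^sub>0) ` T \<subseteq> T"
    and "rposdef G"
  shows
    "let \<rho> = \<rho>\<^sub>f \<theta>\<^sub>0;
         dr = (\<lambda>i. partial i \<rho>\<^sub>f \<theta>\<^sub>0);
         C = (\<lambda>\<beta>. Cbound \<beta> \<rho> dr G);
         JSinv = matrix_inv (Jmat 0 \<rho> dr);
         JRinv = matrix_inv (Jmat 1 \<rho> dr);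
         ReJRinv = map_matrix complex_of_real (Re_mat JRinv);
         \<beta>hat = trace (mabs (msqrt G ** Im_mat JRinv ** msqrt G))
                / (2 * Re (trace (map_matrix complex_of_real G ** (JSinv - ReJRinv))));
         Cmax = (if JSinv \<noteq> ReJRinv \<and> \<beta>hat < 1 then C \<beta>hat else C 1)
     in (\<forall>\<beta>\<in>{0..1}. C \<beta> \<le> Cmax) \<and> Cmax \<in> C ` {0..1}"
proof -
  define \<rho> where "\<rho> = \<rho>\<^sub>f \<theta>\<^sub>0"
  define dr where "dr i = partial i \<rho>\<^sub>f \<theta>\<^sub>0" for i
  define L where "L i = logder 0 \<rho> (dr i)" for i
  obtain T where T: "subspace T" "dim T = CARD('d) + 1" "\<forall>X\<in>T. hermitian X"
      "span (range L) \<subseteq> T" "commop \<rho> ` T \<subseteq> T"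
    using assms(7) unfolding L_def \<rho>_def dr_def by blast
  have "L i \<in> T" for i
    using T(4) span_base[of "L i" "range L"] by blast
  then interpret commop_invariant_extension \<rho> L T
    by unfold_locales (use assms(5,6) T in \<open>auto simp: L_def \<rho>_def dr_def\<close>)
  have dr: "dr = drho"
    using logder_map_logder[OF pos] by (simp add: fun_eq_iff drho_def L_def)
  have "0 \<le> commop_normal_coord \<bullet> (G *v commop_normal_coord)"
    and "0 \<le> trace (mabs (msqrt G ** commop_coord ** msqrt G))"
    using rposdef_form_nonneg[OF assms(8)] trace_mabs_nonneg by auto
  from concave_quadratic_max_on_unit_interval[OF Cbound_eq_quadratic this(2,1)]
  show ?thesis
    unfolding Let_def \<rho>_def[symmetric] dr_def[symmetric] dr sld_inverse_eq_real_rld_inverse_iff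
      Im_rld_inverse sld_minus_real_rld_inverse trace_of_real_mult_outer
    by (simp add: rposdef_form_pos_iff[OF assms(8)])
qed

end
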